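(* Let $(X,d)$ be a separable, zero-dimensional metric space with $d\le 1$. Then there exist a set $A\subseteq{}^\omega\omega$ and a homeomorphism $h:A\to X$ such that $d(h(x),h(y))\le d'(x,y)$ for all $x,y\in A$, where $d'$ is the usual metric on ${}^\omega\omega$. If moreover $d$ is an ultrametric, then $h$ can be chosen so that in addition $d'(h^{-1}(u),h^{-1}(v))\le 2\,d(u,v)$ for all $u,v\in X$. If $d$ is also complete, then the set $A$ can be taken to be closed in ${}^\omega\omega$.
   Context: Work in ZF plus countable choice over the reals. ${}^\omega\omega$ is the Baire space of all infinite sequences of natural numbers, with the usual ultrametric $d'(x,y)=2^{-n}$ where $n$ is least with $x(n)\ne y(n)$ (and $d'(x,x)=0$). *)

theory Defs
  imports "HOL-Analysis.Analysis"
begin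

definition baire_dist :: "(nat \<Rightarrow> nat) \<Rightarrow> (nat \<Rightarrow> nat) \<Rightarrow> real" where
  "baire_dist x y = (if x = y then 0 else (1/2) ^ (LEAST n. x n \<noteq> y n))"

definition baire_topology :: "(nat \<Rightarrow> nat) topology" where
  "baire_topology = Metric_space.mtopology UNIV baire_dist"

definition ultrametric :: "'a set \<Rightarrow> ('a \<Rightarrow> 'a \<Rightarrow> real) \<Rightarrow> bool" where
  "ultrametric X d \<longleftrightarrow> (\<forall>x\<in>X. \<forall>y\<in>X. \<forall>z\<in>X. d x z \<le> max (d x y) (d y z))"

end

theory Submission
  imports Defs
begin

text \<open>The coding map \<open>u \<mapsto> (c\<^sub>i u)\<^sub>i\<close> embeds X into the Baire space as soon as every
  \<open>c\<^sub>i : X \<rightarrow> \<nat>\<close> is locally constant and points agreeing on \<open>c\<^sub>0, \<dots>, c\<^sub>k\<^sub>-\<^sub>1\<close> are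
  \<open>2\<^sup>-\<^sup>k\<close>-close: the map is continuous, its inverse is 1-Lipschitz, and completeness of X
  makes the image closed. Separability and zero-dimensionality give such \<open>c\<^sub>i\<close> with fibres of
  diameter at most \<open>2\<^sup>-\<^sup>(\<^sup>i\<^sup>+\<^sup>1\<^sup>)\<close>: take a countable cover of X by clopen sets of that
  diameter and let \<open>c\<^sub>i u\<close> be the least index of a member containing u. For an ultrametric,
  let instead \<open>c\<^sub>i u\<close> be the least j with \<open>d u (e j) < 2\<^sup>-\<^sup>(\<^sup>i\<^sup>+\<^sup>1\<^sup>)\<close> for a dense sequence e;
  as ultrametric balls of equal radius are equal or disjoint, \<open>c\<^sub>i u = c\<^sub>i v\<close> iff
  \<open>d u v < 2\<^sup>-\<^sup>(\<^sup>i\<^sup>+\<^sup>1\<^sup>)\<close>, which bounds the Baire distance of codes by \<open>2 d\<close>.\<close>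

lemma baire_dist_first_difference:
  assumes "x \<noteq> y"
  obtains n where "baire_dist x y = (1/2)^n" "\<forall>i<n. x i = y i" "x n \<noteq> y n"
proof -
  define n where "n = (LEAST n. x n \<noteq> y n)"
  have "\<exists>n. x n \<noteq> y n" using assms by auto
  then have "x n \<noteq> y n" unfolding n_def by (rule LeastI_ex)
  moreover have "\<forall>i<n. x i = y i" unfolding n_def using not_less_Least by blast
  moreover have "baire_dist x y = (1/2)^n" using assms unfolding baire_dist_def n_def by simp
  ultimately show thesis using that by blast
qed

lemma baire_dist_le_half_power_iff: "baire_dist x y \<le> (1/2)^k \<longleftrightarrow> (\<forall>i<k. x i = y i)"
proof (cases "x = y")
  case True
  then show ?thesis by (simp add: baire_dist_def)
next
  case False
  then obtain n where n: "baire_dist x y = (1/2)^n" "\<forall>i<n. x i = y i" "x n \<noteq> y n"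
    by (rule baire_dist_first_difference)
  have "baire_dist x y \<le> (1/2)^k \<longleftrightarrow> k \<le> n"
    by (simp add: n(1) power_decreasing_iff)
  also have "\<dots> \<longleftrightarrow> (\<forall>i<k. x i = y i)"
    using n(2,3) by (meson leI less_le_trans order_refl)
  finally show ?thesis .
qed

lemma ultrametric_baire_dist: "ultrametric UNIV baire_dist"
  unfolding ultrametric_def
proof (intro ballI)
  fix x y z :: "nat \<Rightarrow> nat"
  show "baire_dist x z \<le> max (baire_dist x y) (baire_dist y z)"
  proof (cases "x = y \<or> y = z")
    case True
    then show ?thesis by (auto simp: baire_dist_def)
  next
    case False
    then obtain a b where a: "baire_dist x y = (1/2)^a" and b: "baire_dist y z = (1/2)^b"
      by (metis baire_dist_first_difference)
    have max_eq: "max (baire_dist x y) (baire_dist y z) = (1/2)^min a b"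
      by (simp add: a b max_def min_def power_decreasing_iff)
    then have "baire_dist x y \<le> (1/2)^min a b" "baire_dist y z \<le> (1/2)^min a b"
      by simp_all
    then have "\<forall>i<min a b. x i = y i \<and> y i = z i"
      by (simp add: baire_dist_le_half_power_iff)
    then have "baire_dist x z \<le> (1/2)^min a b"
      by (simp add: baire_dist_le_half_power_iff)
    then show ?thesis by (simp add: max_eq)
  qed
qed

lemma Metric_space_baire_dist: "Metric_space UNIV baire_dist"
proof
  fix x y z :: "nat \<Rightarrow> nat"
  show "0 \<le> baire_dist x y" by (simp add: baire_dist_def)
  show "baire_dist x y = baire_dist y x"
  proof -
    have "(\<lambda>n. x n \<noteq> y n) = (\<lambda>n. y n \<noteq> x n)" by auto
    then show ?thesis unfolding baire_dist_def by auto
  qed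
  show "(baire_dist x y = 0) = (x = y)" by (simp add: baire_dist_def)
  have "baire_dist x z \<le> max (baire_dist x y) (baire_dist y z)"
    using ultrametric_baire_dist by (simp add: ultrametric_def)
  moreover have "0 \<le> baire_dist x y" "0 \<le> baire_dist y z" by (simp_all add: baire_dist_def)
  ultimately show "baire_dist x z \<le> baire_dist x y + baire_dist y z" by linarith
qed

lemma half_power_less:
  assumes "(0::real) < t" obtains n where "(1/2::real)^n < t"
  using real_arch_pow_inv[OF assms, of "1/2"] by auto

locale baire_code = Metric_space X d for X :: "'a set" and d +
  fixes c :: "nat \<Rightarrow> 'a \<Rightarrow> nat"
  assumes code_fine: "\<lbrakk>u \<in> X; v \<in> X; \<forall>i<k. c i u = c i v\<rbrakk> \<Longrightarrow> d u v \<le> (1/2)^k"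
    and code_locally_constant: "u \<in> X \<Longrightarrow> \<exists>r>0. \<forall>v\<in>X. d u v < r \<longrightarrow> c i v = c i u"
begin

definition code :: "'a \<Rightarrow> nat \<Rightarrow> nat" where
  "code u = (\<lambda>i. c i u)"

lemma dist_le_baire_dist_code:
  assumes "u \<in> X" "v \<in> X"
  shows "d u v \<le> baire_dist (code u) (code v)"
proof (cases "code u = code v")
  case True
  then have "d u v \<le> (1/2)^k" for k
    using code_fine[OF assms] by (metis code_def)
  moreover have "0 \<le> d u v" using assms by simp
  ultimately have "d u v = 0"
    by (metis half_power_less leD order.order_iff_strict)
  then show ?thesis using True by (simp add: baire_dist_def)
next
  case False
  then obtain n where "baire_dist (code u) (code v) = (1/2)^n" "\<forall>i<n. code u i = code v i"
    by (rule baire_dist_first_difference)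
  then show ?thesis using code_fine[OF assms] by (simp add: code_def)
qed

lemma inj_on_code: "inj_on code X"
  by (rule inj_onI) (metis dist_le_baire_dist_code baire_dist_def order_antisym nonneg zero)

lemma code_locally_constant_prefix:
  assumes "u \<in> X"
  shows "\<exists>r>0. \<forall>v\<in>X. d u v < r \<longrightarrow> (\<forall>i<k. c i v = c i u)"
proof (induction k)
  case 0
  show ?case using zero_less_one by blast
next
  case (Suc k)
  then obtain r1 where "r1 > 0" "\<forall>v\<in>X. d u v < r1 \<longrightarrow> (\<forall>i<k. c i v = c i u)"
    by blast
  moreover obtain r2 where "r2 > 0" "\<forall>v\<in>X. d u v < r2 \<longrightarrow> c k v = c k u"
    using code_locally_constant[OF assms] by blast
  ultimately show ?case
    by (intro exI[of _ "min r1 r2"]) (auto simp: less_Suc_eq)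
qed

sublocale code_image: Submetric UNIV baire_dist "code ` X"
  by (simp add: Submetric_def Submetric_axioms_def Metric_space_baire_dist)

lemma continuous_map_code: "continuous_map mtopology code_image.sub.mtopology code"
  unfolding metric_continuous_map[OF code_image.sub.Metric_space_axioms]
proof (intro conjI ballI allI impI)
  fix a and \<epsilon> :: real
  assume a: "a \<in> X" and "0 < \<epsilon>"
  obtain k where k: "(1/2::real)^k < \<epsilon>"
    using half_power_less \<open>0 < \<epsilon>\<close> by blast
  obtain \<delta> where "\<delta> > 0" "\<forall>v\<in>X. d a v < \<delta> \<longrightarrow> (\<forall>i<k. c i v = c i a)"
    using code_locally_constant_prefix[OF a] by blast
  then have "\<forall>v. v \<in> X \<and> d a v < \<delta> \<longrightarrow> baire_dist (code a) (code v) \<le> (1/2)^k"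
    by (simp add: baire_dist_le_half_power_iff code_def)
  then show "\<exists>\<delta>>0. \<forall>v. v \<in> X \<and> d a v < \<delta> \<longrightarrow> baire_dist (code a) (code v) < \<epsilon>"
    using \<open>\<delta> > 0\<close> k by force
qed auto

lemma dist_inv_code_le:
  assumes "x \<in> code ` X" "y \<in> code ` X"
  shows "d (inv_into X code x) (inv_into X code y) \<le> baire_dist x y"
  using assms dist_le_baire_dist_code by (auto simp: inv_into_f_f inj_on_code)

lemma continuous_map_inv_code: "continuous_map code_image.sub.mtopology mtopology (inv_into X code)"
  unfolding code_image.sub.metric_continuous_map[OF Metric_space_axioms]
proof (intro conjI ballI allI impI)
  show "inv_into X code ` code ` X \<subseteq> X"
    by (simp add: image_subsetI inv_into_into)
  fix a and \<epsilon> :: real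
  assume "a \<in> code ` X" "0 < \<epsilon>"
  then show "\<exists>\<delta>>0. \<forall>x. x \<in> code ` X \<and> baire_dist a x < \<delta>
               \<longrightarrow> d (inv_into X code a) (inv_into X code x) < \<epsilon>"
    using dist_inv_code_le by (meson order.strict_trans1)
qed

lemma homeomorphic_map_inv_code:
  "homeomorphic_map (subtopology baire_topology (code ` X)) mtopology (inv_into X code)"
proof -
  have "homeomorphic_maps code_image.sub.mtopology mtopology (inv_into X code) code"
    using continuous_map_code continuous_map_inv_code inj_on_code
    by (auto simp: homeomorphic_maps_def f_inv_into_f)
  then show ?thesis
    by (auto simp: homeomorphic_map_maps baire_topology_def code_image.mtopology_submetric)
qed

lemma MCauchy_inv_code:
  assumes \<sigma>: "code_image.sub.MCauchy \<sigma>"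
  shows "MCauchy (inv_into X code \<circ> \<sigma>)"
  unfolding MCauchy_def
proof (intro conjI allI impI)
  have range_\<sigma>: "range \<sigma> \<subseteq> code ` X"
    using \<sigma> by (simp add: code_image.sub.MCauchy_def)
  show "range (inv_into X code \<circ> \<sigma>) \<subseteq> X"
  proof (rule image_subsetI)
    fix n
    have "\<sigma> n \<in> code ` X" using range_\<sigma> by (rule range_subsetD)
    then show "(inv_into X code \<circ> \<sigma>) n \<in> X" unfolding comp_apply by (rule inv_into_into)
  qed
  fix \<epsilon> :: real assume "0 < \<epsilon>"
  then obtain N where N: "\<forall>n n'. N \<le> n \<longrightarrow> N \<le> n' \<longrightarrow> baire_dist (\<sigma> n) (\<sigma> n') < \<epsilon>"
    using \<sigma> unfolding code_image.sub.MCauchy_def by blast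
  show "\<exists>N. \<forall>n n'. N \<le> n \<longrightarrow> N \<le> n' \<longrightarrow>
          d ((inv_into X code \<circ> \<sigma>) n) ((inv_into X code \<circ> \<sigma>) n') < \<epsilon>"
  proof (intro exI allI impI)
    fix n n' assume "N \<le> n" "N \<le> n'"
    have "d (inv_into X code (\<sigma> n)) (inv_into X code (\<sigma> n')) \<le> baire_dist (\<sigma> n) (\<sigma> n')"
      by (intro dist_inv_code_le range_subsetD[OF range_\<sigma>])
    also have "\<dots> < \<epsilon>" using N \<open>N \<le> n\<close> \<open>N \<le> n'\<close> by blast
    finally show "d ((inv_into X code \<circ> \<sigma>) n) ((inv_into X code \<circ> \<sigma>) n') < \<epsilon>"
      by simp
  qed
qed

lemma closedin_code_image:
  assumes "mcomplete"
  shows "closedin baire_topology (code ` X)"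
  unfolding baire_topology_def
proof (rule code_image.mcomplete_imp_closedin)
  show "code_image.sub.mcomplete"
    unfolding code_image.sub.mcomplete_def
  proof (intro allI impI)
    fix \<sigma> assume \<sigma>: "code_image.sub.MCauchy \<sigma>"
    then have "MCauchy (inv_into X code \<circ> \<sigma>)"
      by (rule MCauchy_inv_code)
    then obtain w where "limitin mtopology (inv_into X code \<circ> \<sigma>) w sequentially"
      using assms unfolding mcomplete_def by blast
    then have "limitin code_image.sub.mtopology (code \<circ> (inv_into X code \<circ> \<sigma>)) (code w) sequentially"
      by (rule continuous_map_limit[OF continuous_map_code])
    moreover have "code \<circ> (inv_into X code \<circ> \<sigma>) = \<sigma>"
    proof
      fix n
      have "range \<sigma> \<subseteq> code ` X"
        using \<sigma> by (simp add: code_image.sub.MCauchy_def)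
      then show "(code \<circ> (inv_into X code \<circ> \<sigma>)) n = \<sigma> n"
        by (simp add: f_inv_into_f range_subsetD)
    qed
    ultimately show "\<exists>x. limitin code_image.sub.mtopology \<sigma> x sequentially" by metis
  qed
qed

lemma inv_into_inv_code: "u \<in> X \<Longrightarrow> inv_into (code ` X) (inv_into X code) u = code u"
  by (rule inv_into_inv_into_eq[OF inj_on_imp_bij_betw[OF inj_on_code]])

lemma baire_dist_code_le_twice_dist:
  assumes separated: "\<And>k u v. \<lbrakk>u \<in> X; v \<in> X; c k u \<noteq> c k v\<rbrakk> \<Longrightarrow> (1/2)^(k+1) \<le> d u v"
    and "u \<in> X" "v \<in> X"
  shows "baire_dist (code u) (code v) \<le> 2 * d u v"
proof (cases "code u = code v")
  case True
  then show ?thesis using assms by (simp add: baire_dist_def)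
next
  case False
  then obtain n where "baire_dist (code u) (code v) = (1/2)^n" "code u n \<noteq> code v n"
    by (rule baire_dist_first_difference)
  then show ?thesis using separated[OF assms(2,3), of n] by (simp add: code_def)
qed

end

lemma (in Metric_space) separable_imp_dense_sequence:
  assumes "separable_space mtopology" "M \<noteq> {}"
  obtains e :: "nat \<Rightarrow> 'a" where "range e \<subseteq> M" "\<And>u r. \<lbrakk>u \<in> M; r > 0\<rbrakk> \<Longrightarrow> \<exists>j. d u (e j) < r"
proof -
  obtain C where C: "countable C" "C \<subseteq> M" "mtopology closure_of C = M"
    using assms(1) unfolding separable_space_def by auto
  then have "C \<noteq> {}" using assms(2) by auto
  show thesis
  proof
    show "range (from_nat_into C) \<subseteq> M"
      using C(2) from_nat_into[OF \<open>C \<noteq> {}\<close>] by blast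
    fix u and r :: real
    assume "u \<in> M" "r > 0"
    then obtain y where "y \<in> C" "d u y < r"
      using C(3) unfolding metric_closure_of by fastforce
    then show "\<exists>j. d u (from_nat_into C j) < r"
      using from_nat_into_surj[OF C(1)] by metis
  qed
qed

lemma least_clopen_index_locally_constant:
  fixes G :: "nat \<Rightarrow> 'a set"
  assumes clopen: "\<And>n. closedin T (G n) \<and> openin T (G n)" and "u \<in> G k"
  obtains U where "openin T U" "u \<in> U" "\<And>v. v \<in> U \<Longrightarrow> (LEAST n. v \<in> G n) = (LEAST n. u \<in> G n)"
proof
  define m where "m = (LEAST n. u \<in> G n)"
  define U where "U = G m - (\<Union>n<m. G n)"
  show "openin T U"
    unfolding U_def using clopen by (intro openin_diff closedin_Union finite_imageI) auto
  show "u \<in> U"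
    unfolding U_def m_def using assms(2) by (auto intro: LeastI dest: not_less_Least)
  fix v assume "v \<in> U"
  then show "(LEAST n. v \<in> G n) = m"
    unfolding U_def by (auto intro!: Least_equality simp: not_less[symmetric])
qed

lemma (in Metric_space) zero_dimensional_small_clopen_neighbourhood:
  assumes "mtopology dim_le 0" "u \<in> M" "\<epsilon> > 0"
  obtains V where "closedin mtopology V" "openin mtopology V" "u \<in> V"
    "\<And>x y. \<lbrakk>x \<in> V; y \<in> V\<rbrakk> \<Longrightarrow> d x y \<le> \<epsilon>"
proof -
  have "neighbourhood_base_of (\<lambda>V. closedin mtopology V \<and> openin mtopology V) mtopology"
    using assms(1) by (rule iffD1[OF dimension_le_0_neighbourhood_base_of_clopen])
  moreover have "openin mtopology (mball u (\<epsilon>/2)) \<and> u \<in> mball u (\<epsilon>/2)"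
    using assms(2,3) by simp
  ultimately obtain U V where "openin mtopology U" "closedin mtopology V \<and> openin mtopology V"
    "u \<in> U" "U \<subseteq> V" and V_small: "V \<subseteq> mball u (\<epsilon>/2)"
    unfolding neighbourhood_base_of by meson
  then have "closedin mtopology V" "openin mtopology V" "u \<in> V"
    by auto
  moreover have "d x y \<le> \<epsilon>" if "x \<in> V" "y \<in> V" for x y
  proof -
    have "x \<in> M" "y \<in> M" "d u x < \<epsilon>/2" "d u y < \<epsilon>/2"
      using that V_small by auto
    moreover have "d x y \<le> d x u + d u y"
      using calculation(1) assms(2) calculation(2) by (rule triangle)
    ultimately show ?thesis by (simp add: commute)
  qed
  ultimately show thesis by (rule that)
qed

lemma (in Metric_space) small_clopen_cover:
  assumes sep: "separable_space mtopology" and zerodim: "mtopology dim_le 0" and "\<epsilon> > 0"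
  obtains G :: "nat \<Rightarrow> 'a set"
  where "\<And>n. closedin mtopology (G n) \<and> openin mtopology (G n)"
    and "\<And>n x y. \<lbrakk>x \<in> G n; y \<in> G n\<rbrakk> \<Longrightarrow> d x y \<le> \<epsilon>"
    and "M \<subseteq> (\<Union>n. G n)"
proof (cases "M = {}")
  case True
  then show thesis by (intro that[of "\<lambda>_. {}"]) auto
next
  case False
  obtain e :: "nat \<Rightarrow> 'a" where e: "range e \<subseteq> M" "\<And>u r. \<lbrakk>u \<in> M; r > 0\<rbrakk> \<Longrightarrow> \<exists>j. d u (e j) < r"
    using separable_imp_dense_sequence[OF sep False] by blast
  define small_clopen where "small_clopen V \<longleftrightarrow>
    closedin mtopology V \<and> openin mtopology V \<and> (\<forall>x\<in>V. \<forall>y\<in>V. d x y \<le> \<epsilon>)" for V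
  \<comment> \<open>\<open>H j m\<close> is a small clopen superset of the ball \<open>B(e j, 2\<^sup>-\<^sup>m)\<close> whenever one exists;
    every point lies in such a ball, so these countably many sets cover M\<close>
  define H where "H j m = (SOME V. small_clopen V \<and> ((\<exists>W. small_clopen W \<and> mball (e j) ((1/2)^m) \<subseteq> W)
           \<longrightarrow> mball (e j) ((1/2)^m) \<subseteq> V))" for j m :: nat
  have "small_clopen (H j m) \<and> ((\<exists>W. small_clopen W \<and> mball (e j) ((1/2)^m) \<subseteq> W)
           \<longrightarrow> mball (e j) ((1/2)^m) \<subseteq> H j m)" for j m
    unfolding H_def
  proof (rule someI_ex)
    have "small_clopen {}" by (simp add: small_clopen_def)
    then show "\<exists>V. small_clopen V \<and> ((\<exists>W. small_clopen W \<and> mball (e j) ((1/2)^m) \<subseteq> W)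
           \<longrightarrow> mball (e j) ((1/2)^m) \<subseteq> V)"
      by (cases "\<exists>W. small_clopen W \<and> mball (e j) ((1/2)^m) \<subseteq> W") blast+
  qed
  then have H: "\<And>j m. small_clopen (H j m)"
    "\<And>j m W. \<lbrakk>small_clopen W; mball (e j) ((1/2)^m) \<subseteq> W\<rbrakk> \<Longrightarrow> mball (e j) ((1/2)^m) \<subseteq> H j m"
    by blast+
  have cover: "\<exists>j m. u \<in> H j m" if "u \<in> M" for u
  proof -
    obtain V where V: "closedin mtopology V" "openin mtopology V" "u \<in> V"
      "\<And>x y. \<lbrakk>x \<in> V; y \<in> V\<rbrakk> \<Longrightarrow> d x y \<le> \<epsilon>"
      using zero_dimensional_small_clopen_neighbourhood[OF zerodim \<open>u \<in> M\<close> \<open>\<epsilon> > 0\<close>] by blast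
    then have "small_clopen V"
      unfolding small_clopen_def by blast
    obtain r where "r > 0" "mball u r \<subseteq> V"
      using V(2,3) unfolding openin_mtopology by blast
    have "r/2 > 0" using \<open>r > 0\<close> by simp
    then obtain m where m: "(1/2::real)^m < r/2"
      by (rule half_power_less)
    obtain j where j: "d u (e j) < (1/2)^m"
      using e(2)[OF \<open>u \<in> M\<close>, of "(1/2)^m"] by auto
    have "e j \<in> M" using e(1) by blast
    have "mball (e j) ((1/2)^m) \<subseteq> mball u r"
      using j m \<open>u \<in> M\<close> by (intro mball_subset) (auto simp: commute)
    then have "mball (e j) ((1/2)^m) \<subseteq> H j m"
      using H(2) \<open>small_clopen V\<close> \<open>mball u r \<subseteq> V\<close> by blast
    moreover have "u \<in> mball (e j) ((1/2)^m)"
      using j \<open>e j \<in> M\<close> \<open>u \<in> M\<close> by (simp add: commute)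
    ultimately show ?thesis by blast
  qed
  have covered: "M \<subseteq> (\<Union>n. case_prod H (prod_decode n))"
  proof
    fix u assume "u \<in> M"
    then obtain j m where "u \<in> H j m" using cover by blast
    then have "u \<in> case_prod H (prod_decode (prod_encode (j, m)))" by simp
    then show "u \<in> (\<Union>n. case_prod H (prod_decode n))" by (rule UN_I[OF UNIV_I])
  qed
  have clopen: "closedin mtopology (case_prod H (prod_decode n)) \<and> openin mtopology (case_prod H (prod_decode n))"
    and small: "\<lbrakk>x \<in> case_prod H (prod_decode n); y \<in> case_prod H (prod_decode n)\<rbrakk> \<Longrightarrow> d x y \<le> \<epsilon>" for n x y
    using H(1)[of "fst (prod_decode n)" "snd (prod_decode n)"] unfolding small_clopen_def case_prod_beta
    by blast+
  show thesis by (rule that[OF clopen small covered])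
qed

lemma (in Metric_space) locally_constant_index_small_fibres:
  assumes sep: "separable_space mtopology" and zerodim: "mtopology dim_le 0" and "\<epsilon> > 0"
  obtains g :: "'a \<Rightarrow> nat"
  where "\<And>u v. \<lbrakk>u \<in> M; v \<in> M; g u = g v\<rbrakk> \<Longrightarrow> d u v \<le> \<epsilon>"
    and "\<And>u. u \<in> M \<Longrightarrow> \<exists>r>0. \<forall>v\<in>M. d u v < r \<longrightarrow> g v = g u"
proof -
  obtain G :: "nat \<Rightarrow> 'a set" where clopen: "\<And>n. closedin mtopology (G n) \<and> openin mtopology (G n)"
    and small: "\<And>n x y. \<lbrakk>x \<in> G n; y \<in> G n\<rbrakk> \<Longrightarrow> d x y \<le> \<epsilon>" and covered: "M \<subseteq> (\<Union>n. G n)"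
    by (rule small_clopen_cover[OF sep zerodim \<open>\<epsilon> > 0\<close>]) blast
  define g where "g u = (LEAST n. u \<in> G n)" for u
  have in_G: "u \<in> G (g u)" if u: "u \<in> M" for u
  proof -
    obtain n where "u \<in> G n" using covered u by blast
    then show ?thesis unfolding g_def by (rule LeastI)
  qed
  show thesis
  proof (rule that)
    fix u v assume "u \<in> M" "v \<in> M" "g u = g v"
    then have "u \<in> G (g u)" "v \<in> G (g u)"
      using in_G[of u] in_G[of v] by simp_all
    then show "d u v \<le> \<epsilon>" by (rule small)
  next
    fix u assume u: "u \<in> M"
    obtain U where U: "openin mtopology U" "u \<in> U" "\<And>v. v \<in> U \<Longrightarrow> g v = g u"
      unfolding g_def
      by (rule least_clopen_index_locally_constant[of mtopology G u "g u", OF clopen in_G[OF u]]) blast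
    obtain r where r: "r > 0" "mball u r \<subseteq> U"
      using U(1,2) unfolding openin_mtopology by blast
    show "\<exists>r>0. \<forall>v\<in>M. d u v < r \<longrightarrow> g v = g u"
    proof (intro exI conjI ballI impI)
      show "r > 0" by (fact r(1))
      fix v assume "v \<in> M" "d u v < r"
      then have "v \<in> U" using r(2) u by auto
      then show "g v = g u" by (rule U(3))
    qed
  qed
qed

lemma zero_dimensional_baire_code:
  assumes metric: "Metric_space X d"
    and sep: "separable_space (Metric_space.mtopology X d)"
    and zerodim: "Metric_space.mtopology X d dim_le 0"
    and bdd: "\<forall>x\<in>X. \<forall>y\<in>X. d x y \<le> 1"
  obtains c where "baire_code X d c"
proof -
  interpret Metric_space X d by (rule metric)
  have "\<forall>i. \<exists>g :: 'a \<Rightarrow> nat. (\<forall>u\<in>X. \<forall>v\<in>X. g u = g v \<longrightarrow> d u v \<le> (1/2)^Suc i)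
          \<and> (\<forall>u\<in>X. \<exists>r>0. \<forall>v\<in>X. d u v < r \<longrightarrow> g v = g u)"
  proof
    fix i
    have "(0::real) < (1/2)^Suc i" by simp
    then obtain g :: "'a \<Rightarrow> nat" where "\<And>u v. \<lbrakk>u \<in> X; v \<in> X; g u = g v\<rbrakk> \<Longrightarrow> d u v \<le> (1/2)^Suc i"
      "\<And>u. u \<in> X \<Longrightarrow> \<exists>r>0. \<forall>v\<in>X. d u v < r \<longrightarrow> g v = g u"
      by (rule locally_constant_index_small_fibres[OF sep zerodim]) blast
    then show "\<exists>g :: 'a \<Rightarrow> nat. (\<forall>u\<in>X. \<forall>v\<in>X. g u = g v \<longrightarrow> d u v \<le> (1/2)^Suc i)
          \<and> (\<forall>u\<in>X. \<exists>r>0. \<forall>v\<in>X. d u v < r \<longrightarrow> g v = g u)" by blast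
  qed
  then obtain c :: "nat \<Rightarrow> 'a \<Rightarrow> nat"
    where c: "\<forall>i. (\<forall>u\<in>X. \<forall>v\<in>X. c i u = c i v \<longrightarrow> d u v \<le> (1/2)^Suc i)
          \<and> (\<forall>u\<in>X. \<exists>r>0. \<forall>v\<in>X. d u v < r \<longrightarrow> c i v = c i u)"
    by (rule choice[THEN exE])
  have "baire_code X d c"
  proof (intro baire_code.intro baire_code_axioms.intro metric)
    fix u v k assume "u \<in> X" "v \<in> X" "\<forall>i<k. c i u = c i v"
    then show "d u v \<le> (1/2)^k"
      using bdd c by (cases k) auto \<comment> \<open>\<open>k = 0\<close> is where \<open>d \<le> 1\<close> is needed\<close>
  qed (use c in blast)
  then show thesis by (rule that)
qed

lemma (in Metric_space) ultrametric_dist_less_cong: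
  assumes "ultrametric M d" "u \<in> M" "v \<in> M" "w \<in> M" "d u v < r"
  shows "d u w < r \<longleftrightarrow> d v w < r"
proof -
  have "d u w \<le> max (d u v) (d v w)" "d v w \<le> max (d v u) (d u w)"
    using assms unfolding ultrametric_def by blast+
  then show ?thesis using \<open>d u v < r\<close> by (auto simp: commute)
qed

lemma ultrametric_baire_code:
  assumes metric: "Metric_space X d"
    and sep: "separable_space (Metric_space.mtopology X d)"
    and bdd: "\<forall>x\<in>X. \<forall>y\<in>X. d x y \<le> 1"
    and ultra: "ultrametric X d"
  obtains c where "baire_code X d c"
    and "\<And>k u v. \<lbrakk>u \<in> X; v \<in> X; c k u \<noteq> c k v\<rbrakk> \<Longrightarrow> (1/2)^(k+1) \<le> d u v"
proof (cases "X = {}")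
  case True
  have "baire_code X d (\<lambda>_ _. 0)"
    by (intro baire_code.intro baire_code_axioms.intro metric) (simp_all add: True)
  then show thesis by (rule that) (simp add: True)
next
  case False
  interpret Metric_space X d by (rule metric)
  obtain e :: "nat \<Rightarrow> 'a" where e: "range e \<subseteq> X" "\<And>u r. \<lbrakk>u \<in> X; r > 0\<rbrakk> \<Longrightarrow> \<exists>j. d u (e j) < r"
    using separable_imp_dense_sequence[OF sep False] by blast
  define c where "c i u = (LEAST j. d u (e j) < (1/2)^Suc i)" for i u
  have near: "d u (e (c i u)) < (1/2)^Suc i" if "u \<in> X" for i u
  proof -
    have "(0::real) < (1/2)^Suc i" by simp
    then have "\<exists>j. d u (e j) < (1/2)^Suc i" by (rule e(2)[OF that])
    then show ?thesis unfolding c_def by (rule LeastI_ex)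
  qed
  have c_eq_iff: "c i u = c i v \<longleftrightarrow> d u v < (1/2)^Suc i" if "u \<in> X" "v \<in> X" for i u v
  proof
    assume "c i u = c i v"
    then have "d (e (c i u)) u < (1/2)^Suc i" "d (e (c i u)) v < (1/2)^Suc i"
      using near that by (metis commute)+
    moreover have "e (c i u) \<in> X" using e(1) by blast
    ultimately show "d u v < (1/2)^Suc i"
      using ultrametric_dist_less_cong[OF ultra _ that] by blast
  next
    assume "d u v < (1/2)^Suc i"
    then have "d u (e j) < (1/2)^Suc i \<longleftrightarrow> d v (e j) < (1/2)^Suc i" for j
      using ultrametric_dist_less_cong[OF ultra that] e(1) by blast
    then show "c i u = c i v" unfolding c_def by simp
  qed
  have "baire_code X d c"
  proof (intro baire_code.intro baire_code_axioms.intro metric)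
    fix u v k assume "u \<in> X" "v \<in> X" "\<forall>i<k. c i u = c i v"
    then show "d u v \<le> (1/2)^k"
      using bdd c_eq_iff by (cases k) (auto intro: less_imp_le)
  next
    fix u i assume "u \<in> X"
    show "\<exists>r>0. \<forall>v\<in>X. d u v < r \<longrightarrow> c i v = c i u"
    proof (intro exI[of _ "(1/2)^Suc i"] conjI ballI impI)
      fix v assume "v \<in> X" "d u v < (1/2)^Suc i"
      then have "c i u = c i v" using c_eq_iff[OF \<open>u \<in> X\<close> \<open>v \<in> X\<close>] by blast
      then show "c i v = c i u" by (rule sym)
    qed simp
  qed
  moreover have "(1/2)^(k+1) \<le> d u v" if "u \<in> X" "v \<in> X" "c k u \<noteq> c k v" for k u v
    using c_eq_iff[OF that(1,2)] that(3) by simp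
  ultimately show thesis by (rule that)
qed

theorem mainTheorem11:
  fixes X :: "'a set" and d :: "'a \<Rightarrow> 'a \<Rightarrow> real"
  assumes metric: "Metric_space X d"
    and sep: "separable_space (Metric_space.mtopology X d)"
    and zerodim: "(Metric_space.mtopology X d) dim_le 0"
    and bdd: "\<forall>x\<in>X. \<forall>y\<in>X. d x y \<le> 1"
  shows
    "(\<exists>A h. homeomorphic_map (subtopology baire_topology A) (Metric_space.mtopology X d) h
        \<and> (\<forall>x\<in>A. \<forall>y\<in>A. d (h x) (h y) \<le> baire_dist x y))
   \<and> (ultrametric X d \<longrightarrow>
     (\<exists>A h. homeomorphic_map (subtopology baire_topology A) (Metric_space.mtopology X d) h
        \<and> (\<forall>x\<in>A. \<forall>y\<in>A. d (h x) (h y) \<le> baire_dist x y)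
        \<and> (\<forall>u\<in>X. \<forall>v\<in>X. baire_dist (inv_into A h u) (inv_into A h v) \<le> 2 * d u v)))
   \<and> (Metric_space.mcomplete X d \<longrightarrow>
     (\<exists>A h. closedin baire_topology A
        \<and> homeomorphic_map (subtopology baire_topology A) (Metric_space.mtopology X d) h
        \<and> (\<forall>x\<in>A. \<forall>y\<in>A. d (h x) (h y) \<le> baire_dist x y)))
   \<and> (ultrametric X d \<and> Metric_space.mcomplete X d \<longrightarrow>
     (\<exists>A h. closedin baire_topology A
        \<and> homeomorphic_map (subtopology baire_topology A) (Metric_space.mtopology X d) h
        \<and> (\<forall>x\<in>A. \<forall>y\<in>A. d (h x) (h y) \<le> baire_dist x y)
        \<and> (\<forall>u\<in>X. \<forall>v\<in>X. baire_dist (inv_into A h u) (inv_into A h v) \<le> 2 * d u v)))"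
proof -
  interpret Metric_space X d by (rule metric)
  obtain c where "baire_code X d c"
    using zero_dimensional_baire_code[OF metric sep zerodim bdd] by blast
  then interpret C: baire_code X d c .
  have embedding: "\<exists>A h. homeomorphic_map (subtopology baire_topology A) mtopology h
      \<and> (\<forall>x\<in>A. \<forall>y\<in>A. d (h x) (h y) \<le> baire_dist x y)
      \<and> (mcomplete \<longrightarrow> closedin baire_topology A)"
    using C.homeomorphic_map_inv_code C.dist_inv_code_le C.closedin_code_image by blast
  have ultrametric_embedding: "\<exists>A h. homeomorphic_map (subtopology baire_topology A) mtopology h
      \<and> (\<forall>x\<in>A. \<forall>y\<in>A. d (h x) (h y) \<le> baire_dist x y)
      \<and> (\<forall>u\<in>X. \<forall>v\<in>X. baire_dist (inv_into A h u) (inv_into A h v) \<le> 2 * d u v)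
      \<and> (mcomplete \<longrightarrow> closedin baire_topology A)"
    if ultra: "ultrametric X d"
  proof -
    obtain c' where "baire_code X d c'"
      and separated: "\<And>k u v. \<lbrakk>u \<in> X; v \<in> X; c' k u \<noteq> c' k v\<rbrakk> \<Longrightarrow> (1/2)^(k+1) \<le> d u v"
      using ultrametric_baire_code[OF metric sep bdd ultra] by blast
    then interpret U: baire_code X d c' by simp
    show ?thesis
      using U.homeomorphic_map_inv_code U.dist_inv_code_le U.closedin_code_image
        U.inv_into_inv_code U.baire_dist_code_le_twice_dist[OF separated]
      by (intro exI[of _ "U.code ` X"] exI[of _ "inv_into X U.code"]) auto
  qed
  show ?thesis
    using embedding ultrametric_embedding by blast
qed

end
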